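(* Let $n>6$. Let $S$ be an independent set of size $(n-1)!$ in the permutation graph $P(n)$ and let $v_S\in\mathbb{R}^{S(n)}$ be its characteristic vector. Then $v_S-\frac1n\mathbf{1}$ lies in the $[n-1,1]$-module.
   Context: The permutation graph $P(n)$ has vertex set $S(n)$, and $\pi,\sigma$ are adjacent iff $\pi(i)\neq\sigma(i)$ for all $i$. $\mathbf 1$ is the all-ones vector in $\mathbb{R}^{S(n)}$. For a partition $\lambda\vdash n$ with irreducible character $\chi_\lambda$ of $S(n)$, let $E_\lambda$ be the $n!\times n!$ matrix indexed by $S(n)$ with $(E_\lambda)_{\pi,\sigma}=\frac{\chi_\lambda(1)}{n!}\chi_\lambda(\pi^{-1}\sigma)$; the $\lambda$-module is the column space of $E_\lambda$ (a subspace of $\mathbb{R}^{S(n)}$ of dimension $\chi_\lambda(1)^2$). *)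

theory Defs
  imports "HOL-Combinatorics.Permutations" Complex_Main
begin

definition perms :: "nat \<Rightarrow> (nat \<Rightarrow> nat) set" where
  "perms n = {p. p permutes {..<n}}"

definition perm_adj :: "nat \<Rightarrow> (nat \<Rightarrow> nat) \<Rightarrow> (nat \<Rightarrow> nat) \<Rightarrow> bool" where
  "perm_adj n p q \<longleftrightarrow> (\<forall>i<n. p i \<noteq> q i)"

definition perm_independent :: "nat \<Rightarrow> (nat \<Rightarrow> nat) set \<Rightarrow> bool" where
  "perm_independent n S \<longleftrightarrow> S \<subseteq> perms n \<and>
     (\<forall>p\<in>S. \<forall>q\<in>S. p \<noteq> q \<longrightarrow> \<not> perm_adj n p q)"

text \<open>Irreducible character of S(n) for the partition [n-1,1] (standard representation):
  number of fixed points minus one.\<close>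
definition chi_std :: "nat \<Rightarrow> (nat \<Rightarrow> nat) \<Rightarrow> real" where
  "chi_std n p = real (card {i\<in>{..<n}. p i = i}) - 1"

definition E_std :: "nat \<Rightarrow> (nat \<Rightarrow> nat) \<Rightarrow> (nat \<Rightarrow> nat) \<Rightarrow> real" where
  "E_std n p q = chi_std n id / fact n * chi_std n (inv p \<circ> q)"

text \<open>The [n-1,1]-module: column space of E_std, as a subspace of functions on S(n)
  (only values on perms n matter).\<close>
definition module_std :: "nat \<Rightarrow> ((nat \<Rightarrow> nat) \<Rightarrow> real) set" where
  "module_std n = {v. \<exists>w. \<forall>p\<in>perms n. v p = (\<Sum>q\<in>perms n. E_std n p q * w q)}"

end

theory Submission
  imports Defs "HOL-Library.Indicator_Function"
begin

text \<open>
  A coclique \<open>S\<close> of size \<open>(n-1)!\<close> attains the clique-coclique bound, so it meets every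
  \<open>n\<close>-clique (a Latin square, obtained by completing Latin rectangles with Hall's theorem) in
  exactly one point. Exchanging two rows of a Latin square on a set of columns therefore does not
  change how many of the two rows lie in \<open>S\<close>. Translating \<open>S\<close> to contain the identity, this
  switching shows that membership in \<open>S\<close> of a permutation with support \<open>X\<close> depends only on \<open>X\<close>,
  and the resulting 0/1-valued function of \<open>X\<close> obeys complementation, switching and covering
  relations that force it to be the indicator of the sets avoiding one point \<open>i0\<close>. Hence
  \<open>S\<close> is the stabilizer of \<open>i0\<close>, and in general a coset \<open>{p. p i = j}\<close>. For a coset,
  applying \<open>E\<^bsub>[n-1,1]\<^esub>\<close> to \<open>v\<^sub>S\<close> reproduces \<open>v\<^sub>S - 1/n\<close>, by counting agreements
  of permutations.
\<close>

definition hall_condition :: "'i set \<Rightarrow> ('i \<Rightarrow> 'a set) \<Rightarrow> bool" where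
  "hall_condition I A \<longleftrightarrow> (\<forall>J\<subseteq>I. card J \<le> card (\<Union>(A ` J)))"

lemma hall_condition_delete:
  assumes fin: "finite I" "\<forall>i\<in>I. finite (A i)" and i: "i \<in> I"
    and surplus: "\<forall>J\<subseteq>I. J \<noteq> {} \<longrightarrow> J \<noteq> I \<longrightarrow> card J < card (\<Union>(A ` J))"
  shows "hall_condition (I - {i}) (\<lambda>j. A j - {x})"
  unfolding hall_condition_def
proof (intro allI impI)
  fix J assume J: "J \<subseteq> I - {i}"
  show "card J \<le> card (\<Union>j\<in>J. A j - {x})"
  proof (cases "J = {}")
    case False
    have "card J < card (\<Union>(A ` J))" using surplus J i False by blast
    moreover have "finite (\<Union>(A ` J))" using J fin finite_subset by blast
    then have "card (\<Union>(A ` J)) \<le> card (\<Union>(A ` J) - {x}) + 1"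
      using card_Suc_Diff1[of "\<Union>(A ` J)" x] by (cases "x \<in> \<Union>(A ` J)") simp_all
    moreover have "(\<Union>j\<in>J. A j - {x}) = \<Union>(A ` J) - {x}" by auto
    ultimately show ?thesis by (metis Suc_eq_plus1 Suc_leI add_le_cancel_right order_trans)
  qed simp
qed

lemma hall_condition_contract:
  assumes fin: "finite I" "\<forall>i\<in>I. finite (A i)" and hall: "hall_condition I A"
    and J0: "J0 \<subseteq> I" and tight: "card (\<Union>(A ` J0)) \<le> card J0"
  shows "hall_condition (I - J0) (\<lambda>j. A j - \<Union>(A ` J0))"
  unfolding hall_condition_def
proof (intro allI impI)
  fix K assume K: "K \<subseteq> I - J0"
  have finJ0: "finite J0" and finK: "finite K" using J0 K fin(1) by (auto intro: finite_subset)
  have "card (K \<union> J0) \<le> card (\<Union>(A ` (K \<union> J0)))"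
    using hall K J0 unfolding hall_condition_def by blast
  moreover have "card (K \<union> J0) = card K + card J0"
    using K finK finJ0 by (subst card_Un_disjoint) auto
  moreover have "card J0 = card (\<Union>(A ` J0))"
    using hall J0 tight unfolding hall_condition_def by (simp add: le_antisym)
  moreover have "card (\<Union>(A ` (K \<union> J0)) - \<Union>(A ` J0)) = card (\<Union>(A ` (K \<union> J0))) - card (\<Union>(A ` J0))"
    using K J0 fin finK finJ0 by (intro card_Diff_subset) auto
  moreover have "(\<Union>j\<in>K. A j - \<Union>(A ` J0)) = \<Union>(A ` (K \<union> J0)) - \<Union>(A ` J0)" by auto
  ultimately show "card K \<le> card (\<Union>j\<in>K. A j - \<Union>(A ` J0))" by (metis add_le_imp_le_diff)
qed

lemma inj_on_glue:
  assumes "inj_on f J" "inj_on g K" "f ` J \<inter> g ` K = {}"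
  shows "inj_on (\<lambda>j. if j \<in> J then f j else g j) (J \<union> K)"
proof (rule inj_onI)
  fix a b assume ab: "a \<in> J \<union> K" "b \<in> J \<union> K"
    and eq: "(if a \<in> J then f a else g a) = (if b \<in> J then f b else g b)"
  show "a = b"
  proof (cases "a \<in> J"; cases "b \<in> J")
    assume "a \<in> J" "b \<in> J" then show ?thesis using eq assms(1) by (simp add: inj_on_eq_iff)
  next
    assume "a \<notin> J" "b \<notin> J" then show ?thesis using eq ab assms(2) by (simp add: inj_on_eq_iff)
  next
    assume "a \<in> J" "b \<notin> J" then show ?thesis using eq ab assms(3) by (auto simp: disjoint_iff)
  next
    assume "a \<notin> J" "b \<in> J" then show ?thesis using eq ab assms(3) by (auto simp: disjoint_iff)
  qed
qed

text \<open>Hall's marriage theorem, by induction on \<open>card I\<close>: either every proper subfamily has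
  surplus, and one may match any point greedily, or some proper subfamily is tight and can be
  matched separately from the rest.\<close>

theorem hall_theorem:
  assumes "finite I" "\<forall>i\<in>I. finite (A i)" "hall_condition I A"
  shows "\<exists>f. inj_on f I \<and> (\<forall>i\<in>I. f i \<in> A i)"
  using assms
proof (induction "card I" arbitrary: I A rule: less_induct)
  case less
  note fin = less.prems(1,2) and hall = less.prems(3)
  show ?case
  proof (cases "\<forall>J\<subseteq>I. J \<noteq> {} \<longrightarrow> J \<noteq> I \<longrightarrow> card J < card (\<Union>(A ` J))")
    case surplus: True
    show ?thesis
    proof (cases "I = {}")
      case False
      then obtain i where i: "i \<in> I" by auto
      have "card {i} \<le> card (\<Union>(A ` {i}))" using hall i unfolding hall_condition_def by blast
      then obtain x where x: "x \<in> A i" by fastforce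
      have "\<forall>j\<in>I - {i}. finite (A j - {x})" using fin(2) by auto
      then obtain f where f: "inj_on f (I - {i})" "\<forall>j\<in>I - {i}. f j \<in> A j - {x}"
        using less.hyps[OF card_Diff1_less[OF fin(1) i] finite_Diff[OF fin(1)] _
            hall_condition_delete[OF fin i surplus]] by blast
      have "inj_on (f(i := x)) I"
        using f i by (subst insert_Diff[OF i, symmetric], subst inj_on_insert) (auto simp: inj_on_def)
      then show ?thesis using f x by (intro exI[of _ "f(i := x)"]) auto
    qed simp
  next
    case False
    then obtain J0 where J0: "J0 \<subseteq> I" "J0 \<noteq> {}" "J0 \<noteq> I" "card (\<Union>(A ` J0)) \<le> card J0"
      by (auto simp: not_less)
    have finJ0: "finite J0" using J0(1) fin finite_subset by blast
    have "0 < card J0" using finJ0 J0(2) by (simp add: card_gt_0_iff)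
    have small: "card J0 < card I" using J0(1,3) fin(1) by (simp add: psubset_card_mono)
    have rest_small: "card (I - J0) < card I"
      using J0(1) finJ0 \<open>0 < card J0\<close> small by (simp add: card_Diff_subset)
    have "\<exists>g. inj_on g J0 \<and> (\<forall>j\<in>J0. g j \<in> A j)"
    proof (rule less.hyps[OF small finJ0])
      show "\<forall>i\<in>J0. finite (A i)" using fin(2) J0(1) by auto
      show "hall_condition J0 A" using hall J0(1) unfolding hall_condition_def by auto
    qed
    then obtain g where g: "inj_on g J0" "\<forall>j\<in>J0. g j \<in> A j" by blast
    have "\<forall>i\<in>I - J0. finite (A i - \<Union>(A ` J0))" using fin(2) by auto
    then obtain h where h: "inj_on h (I - J0)" "\<forall>j\<in>I - J0. h j \<in> A j - \<Union>(A ` J0)"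
      using less.hyps[of "I - J0" "\<lambda>j. A j - \<Union>(A ` J0)", OF rest_small finite_Diff[OF fin(1)] _
          hall_condition_contract[OF fin hall J0(1,4)]]
      by blast
    define f where "f j = (if j \<in> J0 then g j else h j)" for j
    have "g ` J0 \<subseteq> \<Union>(A ` J0)" "h ` (I - J0) \<inter> \<Union>(A ` J0) = {}" using g(2) h(2) by auto
    then have "g ` J0 \<inter> h ` (I - J0) = {}" by blast
    from inj_on_glue[OF g(1) h(1) this] have "inj_on f I"
      using J0(1) unfolding f_def by (simp add: Un_absorb1)
    moreover have "\<forall>i\<in>I. f i \<in> A i" using g(2) h(2) unfolding f_def by simp
    ultimately show ?thesis by blast
  qed
qed

lemma permutes_of_hall_condition:
  assumes fin: "finite X" and sub: "\<forall>x\<in>X. A x \<subseteq> X" and hall: "hall_condition X A"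
  shows "\<exists>\<sigma>. \<sigma> permutes X \<and> (\<forall>x\<in>X. \<sigma> x \<in> A x)"
proof -
  have "\<forall>x\<in>X. finite (A x)" using fin sub finite_subset by blast
  then obtain f where f: "inj_on f X" "\<forall>x\<in>X. f x \<in> A x"
    using hall_theorem[OF fin _ hall] by blast
  define \<sigma> where "\<sigma> x = (if x \<in> X then f x else x)" for x
  have "\<sigma> permutes X"
  proof (rule inj_imp_permutes[OF _ fin])
    show "inj_on \<sigma> X" using f(1) unfolding \<sigma>_def inj_on_def by simp
  qed (use f(2) sub in \<open>auto simp: \<sigma>_def\<close>)
  then show ?thesis using f(2) unfolding \<sigma>_def by auto
qed

text \<open>Double counting the incidences between a subfamily and its neighbourhood.\<close>

lemma hall_condition_regular:
  assumes fin: "finite I" "finite Y" and sub: "\<forall>i\<in>I. A i \<subseteq> Y" and k: "0 < k"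
    and row: "\<forall>i\<in>I. k \<le> card (A i)" and col: "\<forall>y\<in>Y. card {i\<in>I. y \<in> A i} \<le> k"
  shows "hall_condition I A"
  unfolding hall_condition_def
proof (intro allI impI)
  fix J assume J: "J \<subseteq> I"
  define N where "N = \<Union>(A ` J)"
  have finJ: "finite J" using J fin(1) finite_subset by blast
  have NY: "N \<subseteq> Y" unfolding N_def using J sub by blast
  have finN: "finite N" using NY fin(2) finite_subset by blast
  have finA: "finite (A i)" if "i \<in> J" for i using that J sub fin(2) finite_subset by blast
  have "card J * k \<le> (\<Sum>i\<in>J. card (A i))" using sum_bounded_below[of J k "\<lambda>i. card (A i)"] J row by auto
  also have "\<dots> = card (Sigma J A)" using finJ finA by (simp add: card_SigmaI)
  also have "\<dots> \<le> card (Sigma N (\<lambda>y. {i\<in>I. y \<in> A i}))"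
  proof (rule card_inj_on_le)
    show "inj_on (\<lambda>(i, y). (y, i)) (Sigma J A)" by (auto simp: inj_on_def)
    show "(\<lambda>(i, y). (y, i)) ` Sigma J A \<subseteq> Sigma N (\<lambda>y. {i\<in>I. y \<in> A i})"
      using J unfolding N_def by auto
    show "finite (Sigma N (\<lambda>y. {i\<in>I. y \<in> A i}))" using finN fin(1) by simp
  qed
  also have "\<dots> = (\<Sum>y\<in>N. card {i\<in>I. y \<in> A i})" using finN fin(1) by (simp add: card_SigmaI)
  also have "\<dots> \<le> card N * k" using sum_bounded_above[of N "\<lambda>y. card {i\<in>I. y \<in> A i}" k] NY col by auto
  finally show "card J \<le> card (\<Union>(A ` J))" using k unfolding N_def by simp
qed

lemma finite_perms: "finite (perms n)"
  unfolding perms_def by (rule finite_permutations) simp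

lemma card_perms: "card (perms n) = fact n"
  unfolding perms_def by (rule card_permutations) simp_all

lemma perms_compose: "p \<in> perms n \<Longrightarrow> q \<in> perms n \<Longrightarrow> p \<circ> q \<in> perms n"
  unfolding perms_def by (simp add: permutes_compose)

lemma perms_inv: "p \<in> perms n \<Longrightarrow> inv p \<in> perms n"
  unfolding perms_def by (simp add: permutes_inv)

lemma perms_id: "id \<in> perms n"
  unfolding perms_def by simp

lemma perms_less: "p \<in> perms n \<Longrightarrow> i < n \<Longrightarrow> p i < n"
  unfolding perms_def using permutes_in_image[of p "{..<n}" i] by simp

lemma perms_fixpoint: "p \<in> perms n \<Longrightarrow> \<not> i < n \<Longrightarrow> p i = i"
  unfolding perms_def using permutes_not_in[of p "{..<n}" i] by simp

lemma perms_inverses: "p \<in> perms n \<Longrightarrow> p (inv p x) = x" "p \<in> perms n \<Longrightarrow> inv p (p x) = x"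
  unfolding perms_def by (simp_all add: permutes_inverses)

lemma perms_eq_iff: "p \<in> perms n \<Longrightarrow> p x = p y \<longleftrightarrow> x = y"
  by (metis perms_inverses(2))

lemma perms_inv_eq_iff: "p \<in> perms n \<Longrightarrow> inv p x = y \<longleftrightarrow> p y = x"
  by (metis perms_inverses)

lemma inj_on_perms_compose_left: "g \<in> perms n \<Longrightarrow> inj_on ((\<circ>) g) X"
  by (rule inj_onI) (metis comp_apply ext perms_eq_iff)

lemma sum_perms_compose_right: "k \<in> perms n \<Longrightarrow> (\<Sum>g\<in>perms n. f (g \<circ> k)) = (\<Sum>g\<in>perms n. f g)"
  unfolding perms_def by (metis sum_permutations_compose_right mem_Collect_eq)

definition perm_clique :: "nat \<Rightarrow> (nat \<Rightarrow> nat) set \<Rightarrow> bool" where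
  "perm_clique n K \<longleftrightarrow> K \<subseteq> perms n \<and> (\<forall>p\<in>K. \<forall>q\<in>K. p \<noteq> q \<longrightarrow> perm_adj n p q)"

lemma perm_adj_sym: "perm_adj n p q \<Longrightarrow> perm_adj n q p"
  unfolding perm_adj_def by auto

lemma perm_adj_irrefl: "0 < n \<Longrightarrow> \<not> perm_adj n p p"
  unfolding perm_adj_def by auto

lemma finite_perm_clique: "perm_clique n K \<Longrightarrow> finite K"
  unfolding perm_clique_def using finite_perms finite_subset by blast

lemma perm_clique_agree_imp_eq:
  "perm_clique n K \<Longrightarrow> p \<in> K \<Longrightarrow> q \<in> K \<Longrightarrow> i < n \<Longrightarrow> p i = q i \<Longrightarrow> p = q"
  unfolding perm_clique_def perm_adj_def by blast

text \<open>Completing a Latin rectangle by one row: the values still allowed in each column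
  form a regular bipartite graph, so Hall's theorem applies.\<close>

lemma perm_clique_extend:
  assumes K: "perm_clique n K" and less: "card K < n"
  shows "\<exists>p\<in>perms n. \<forall>q\<in>K. perm_adj n p q"
proof -
  have KP: "K \<subseteq> perms n" using K unfolding perm_clique_def by simp
  have finK: "finite K" using K by (rule finite_perm_clique)
  define A where "A i = {..<n} - (\<lambda>q. q i) ` K" for i
  have card_A: "card (A i) = n - card K" if "i < n" for i
  proof -
    have "inj_on (\<lambda>q. q i) K" using perm_clique_agree_imp_eq[OF K] that by (auto intro: inj_onI)
    moreover have "(\<lambda>q. q i) ` K \<subseteq> {..<n}" using KP that perms_less by blast
    ultimately show ?thesis unfolding A_def using finK by (simp add: card_Diff_subset card_image)
  qed
  have card_col: "card {i\<in>{..<n}. j \<in> A i} = n - card K" if j: "j < n" for j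
  proof -
    have "(\<exists>q\<in>K. q i = j) \<longleftrightarrow> (\<exists>q\<in>K. inv q j = i)" for i
      using KP perms_inv_eq_iff by blast
    then have "{i\<in>{..<n}. j \<in> A i} = {..<n} - (\<lambda>q. inv q j) ` K"
      using j unfolding A_def by (auto simp: image_iff) metis+
    moreover have "inj_on (\<lambda>q. inv q j) K"
    proof (rule inj_onI)
      fix p q assume "p \<in> K" "q \<in> K" "inv p j = inv q j"
      moreover have "inv p j < n" using \<open>p \<in> K\<close> KP j perms_less perms_inv by blast
      ultimately show "p = q"
        using KP perm_clique_agree_imp_eq[OF K, of p q "inv p j"] perms_inverses(1) by (metis subsetD)
    qed
    moreover have "(\<lambda>q. inv q j) ` K \<subseteq> {..<n}" using KP j perms_less perms_inv by blast
    ultimately show ?thesis using finK by (simp add: card_Diff_subset card_image)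
  qed
  have A_sub: "\<forall>i\<in>{..<n}. A i \<subseteq> {..<n}" unfolding A_def by blast
  have "hall_condition {..<n} A"
  proof (rule hall_condition_regular[where Y = "{..<n}" and k = "n - card K"])
    show "\<forall>i\<in>{..<n}. n - card K \<le> card (A i)" using card_A by simp
    show "\<forall>j\<in>{..<n}. card {i\<in>{..<n}. j \<in> A i} \<le> n - card K" using card_col by simp
  qed (use A_sub less in simp_all)
  then obtain p where "p permutes {..<n}" "\<forall>i\<in>{..<n}. p i \<in> A i"
    using permutes_of_hall_condition[OF finite_lessThan A_sub] by blast
  then show ?thesis unfolding perms_def perm_adj_def A_def by blast
qed

lemma perm_clique_extend_to_card:
  assumes "perm_clique n K0" "card K0 \<le> n"
  shows "\<exists>K. K0 \<subseteq> K \<and> perm_clique n K \<and> card K = n"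
  using assms
proof (induction "n - card K0" arbitrary: K0 rule: less_induct)
  case less
  show ?case
  proof (cases "card K0 = n")
    case False
    then have lt: "card K0 < n" using less.prems by simp
    obtain p where p: "p \<in> perms n" "\<forall>q\<in>K0. perm_adj n p q"
      using perm_clique_extend[OF less.prems(1) lt] by blast
    have "p \<notin> K0" using p(2) lt perm_adj_irrefl[of n p] by auto
    then have card: "card (insert p K0) = Suc (card K0)"
      using finite_perm_clique[OF less.prems(1)] by simp
    have "perm_clique n (insert p K0)"
      using less.prems(1) p perm_adj_sym[of n p] unfolding perm_clique_def by auto
    moreover have "n - card (insert p K0) < n - card K0" using card lt by simp
    ultimately obtain K where "insert p K0 \<subseteq> K" "perm_clique n K" "card K = n"
      using less.hyps[of "insert p K0"] card lt by auto
    then show ?thesis by blast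
  qed (use less.prems in blast)
qed

lemma perm_clique_translate:
  assumes "perm_clique n K" "g \<in> perms n"
  shows "perm_clique n ((\<circ>) g ` K)"
  using assms unfolding perm_clique_def perm_adj_def by (auto simp: perms_compose perms_eq_iff) metis

lemma card_perm_independent_inter_clique:
  assumes "perm_independent n S" "perm_clique n K"
  shows "card (S \<inter> K) \<le> 1"
proof -
  have "finite (S \<inter> K)" using finite_perm_clique[OF assms(2)] by simp
  moreover have "x = y" if "x \<in> S \<inter> K" "y \<in> S \<inter> K" for x y
    using assms that unfolding perm_independent_def perm_clique_def by blast
  ultimately show ?thesis by (simp add: card_le_Suc0_iff_eq)
qed

lemma sum_card_inter_translates:
  assumes S: "S \<subseteq> perms n" and K: "K \<subseteq> perms n"
  shows "(\<Sum>g\<in>perms n. card (S \<inter> (\<circ>) g ` K)) = card K * card S"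
proof -
  have finK: "finite K" using K finite_perms finite_subset by blast
  have "card (S \<inter> (\<circ>) g ` K) = (\<Sum>k\<in>K. indicator S (g \<circ> k))" if g: "g \<in> perms n" for g
  proof -
    have "inj_on ((\<circ>) g) K" using g by (rule inj_on_perms_compose_left)
    then have "card (S \<inter> (\<circ>) g ` K) = card {k\<in>K. g \<circ> k \<in> S}"
      by (subst card_image[symmetric]) (auto intro: inj_on_subset arg_cong[where f = card])
    also have "\<dots> = (\<Sum>k\<in>K. indicator S (g \<circ> k))"
      using finK by (simp add: indicator_def of_bool_def sum.If_cases Int_def)
    finally show ?thesis .
  qed
  then have "(\<Sum>g\<in>perms n. card (S \<inter> (\<circ>) g ` K)) = (\<Sum>k\<in>K. \<Sum>g\<in>perms n. indicator S (g \<circ> k))"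
    by (simp add: sum.swap[of _ K])
  also have "\<dots> = (\<Sum>k\<in>K. card S)"
  proof (rule sum.cong[OF refl])
    fix k assume "k \<in> K"
    then have "(\<Sum>g\<in>perms n. indicator S (g \<circ> k)) = (\<Sum>g\<in>perms n. indicator S g :: nat)"
      using K by (intro sum_perms_compose_right) auto
    also have "\<dots> = card S" using S finite_perms by (simp add: sum_indicator_eq_card Int_absorb1)
    finally show "(\<Sum>g\<in>perms n. indicator S (g \<circ> k)) = card S" .
  qed
  finally show ?thesis by simp
qed

text \<open>Summed over all translates of the clique the intersections count \<open>n (n-1)! = n!\<close> points,
  one per translate on average, and no translate can contain two points of a coclique.\<close>

lemma card_perm_independent_inter_clique_eq_1:
  assumes S: "perm_independent n S" and card_S: "card S = fact (n - 1)" and n: "0 < n"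
    and K: "perm_clique n K" and card_K: "card K = n"
  shows "card (S \<inter> K) = 1"
proof (rule ccontr)
  assume "card (S \<inter> K) \<noteq> 1"
  then have "\<exists>g\<in>perms n. card (S \<inter> (\<circ>) g ` K) < 1"
    using card_perm_independent_inter_clique[OF S K] perms_id by (intro bexI[of _ id]) auto
  moreover have "card (S \<inter> (\<circ>) g ` K) \<le> 1" if "g \<in> perms n" for g
    using card_perm_independent_inter_clique[OF S perm_clique_translate[OF K that]] .
  ultimately have "(\<Sum>g\<in>perms n. card (S \<inter> (\<circ>) g ` K)) < (\<Sum>g\<in>perms n. 1)"
    using finite_perms by (intro sum_strict_mono_ex1) auto
  also have "\<dots> = n * fact (n - 1)" using n by (simp add: card_perms fact_reduce[of n])
  also have "\<dots> = card K * card S" using card_K card_S by simp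
  finally show False
    using sum_card_inter_translates S K unfolding perm_independent_def perm_clique_def by simp
qed

text \<open>Replacing \<open>p1, p2\<close> by \<open>q1, q2\<close> in an \<open>n\<close>-clique through \<open>p1, p2\<close> yields another
  \<open>n\<close>-clique, and the coclique meets both exactly once.\<close>

lemma perm_independent_switch:
  assumes S: "perm_independent n S" and card_S: "card S = fact (n - 1)" and n: "2 \<le> n"
    and p: "p1 \<in> perms n" "p2 \<in> perms n" "perm_adj n p1 p2"
    and q: "q1 \<in> perms n" "q2 \<in> perms n"
    and same_values: "\<forall>i<n. (q1 i = p1 i \<and> q2 i = p2 i) \<or> (q1 i = p2 i \<and> q2 i = p1 i)"
  shows "indicator S p1 + indicator S p2 = (indicator S q1 + indicator S q2 :: nat)"
proof -
  have "p1 \<noteq> p2" using p(3) n perm_adj_irrefl[of n p1] by auto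
  then have "perm_clique n {p1, p2}" using p perm_adj_sym[OF p(3)] unfolding perm_clique_def by auto
  then obtain K where K: "{p1, p2} \<subseteq> K" "perm_clique n K" "card K = n"
    using perm_clique_extend_to_card[of n "{p1, p2}"] n \<open>p1 \<noteq> p2\<close> by auto
  define R where "R = K - {p1, p2}"
  have finR: "finite R" unfolding R_def using finite_perm_clique[OF K(2)] by simp
  have R_adj: "r i \<noteq> p1 i" "r i \<noteq> p2 i" if "r \<in> R" "i < n" for r i
    using K that unfolding R_def perm_clique_def perm_adj_def by auto
  have q_adj: "perm_adj n q1 q2" using p(3) same_values unfolding perm_adj_def by fastforce
  have "q1 \<noteq> q2" using q_adj n perm_adj_irrefl[of n q1] by auto
  have "q1 \<notin> R" "q2 \<notin> R" using R_adj[of _ 0] same_values n by fastforce+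
  have "perm_clique n (insert q1 (insert q2 R))"
  proof -
    have "perm_adj n q r" "perm_adj n r q" if "q = q1 \<or> q = q2" "r \<in> R" for q r
      using same_values R_adj[OF that(2)] that(1) unfolding perm_adj_def by fastforce+
    then show ?thesis using K(2) q q_adj perm_adj_sym[OF q_adj]
      unfolding perm_clique_def R_def by auto
  qed
  moreover have "card (insert q1 (insert q2 R)) = n" "card (insert p1 (insert p2 R)) = n"
    using K n finR \<open>p1 \<noteq> p2\<close> \<open>q1 \<noteq> q2\<close> \<open>q1 \<notin> R\<close> \<open>q2 \<notin> R\<close> unfolding R_def
    by (simp_all add: insert_absorb)
  moreover have "K = insert p1 (insert p2 R)" using K(1) unfolding R_def by auto
  ultimately have "card (S \<inter> insert q1 (insert q2 R)) = card (S \<inter> insert p1 (insert p2 R))"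
    using card_perm_independent_inter_clique_eq_1[OF S card_S] K(2) n by simp
  then have "(\<Sum>y\<in>insert q1 (insert q2 R). indicator S y) = (\<Sum>y\<in>insert p1 (insert p2 R). indicator S y :: nat)"
    using finR by (simp add: sum_indicator_eq_card Int_commute)
  then show ?thesis
    using finR \<open>q1 \<noteq> q2\<close> \<open>q1 \<notin> R\<close> \<open>q2 \<notin> R\<close> \<open>p1 \<noteq> p2\<close> unfolding R_def by simp
qed

lemma card_permutes_with_value:
  assumes fin: "finite A" and a: "a \<in> A" and b: "b \<in> A"
  shows "card {q. q permutes A \<and> q a = b \<and> P (transpose a b \<circ> q)} = card {r. r permutes (A - {a}) \<and> P r}"
proof -
  define t where "t = transpose a b"
  have tt: "t \<circ> t = id" unfolding t_def by simp
  have tA: "t permutes A" unfolding t_def using a b by (rule permutes_swap_id)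
  have fixing: "{r. r permutes (A - {a}) \<and> P r} = {r. r permutes A \<and> r a = a \<and> P r}"
    by (auto dest: permutes_subset[of _ "A - {a}" A] permutes_not_in intro: permutes_superset)
  have "bij_betw ((\<circ>) t) {q. q permutes A \<and> q a = b \<and> P (t \<circ> q)} {r. r permutes A \<and> r a = a \<and> P r}"
  proof (rule bij_betw_byWitness[where f' = "(\<circ>) t"])
    show "(\<circ>) t ` {q. q permutes A \<and> q a = b \<and> P (t \<circ> q)} \<subseteq> {r. r permutes A \<and> r a = a \<and> P r}"
      using permutes_compose[OF _ tA] by (auto simp: t_def)
    show "(\<circ>) t ` {r. r permutes A \<and> r a = a \<and> P r} \<subseteq> {q. q permutes A \<and> q a = b \<and> P (t \<circ> q)}"
      using permutes_compose[OF _ tA] by (auto simp: comp_assoc[symmetric] tt) (simp add: t_def)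
  qed (simp_all add: comp_assoc[symmetric] tt)
  then show ?thesis unfolding fixing t_def by (rule bij_betw_same_card)
qed

lemma card_perms_value:
  assumes "a < n" "b < n"
  shows "card {q\<in>perms n. q a = b} = fact (n - 1)"
  using card_permutes_with_value[of "{..<n}" a b "\<lambda>_. True"] assms
  by (simp add: perms_def card_permutations)

lemma card_perms_two_values:
  assumes "i < n" "j < n" "k < n" "l < n" "i \<noteq> k" "j \<noteq> l"
  shows "card {q\<in>perms n. q i = j \<and> q k = l} = fact (n - 2)"
proof -
  define l' where "l' = transpose i j l"
  have l': "l' \<noteq> i" "l' < n" unfolding l'_def using assms by (auto simp: transpose_def)
  have "\<And>q. q k = l \<longleftrightarrow> (transpose i j \<circ> q) k = l'"
    unfolding l'_def by (auto dest: transpose_eq_imp_eq)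
  then have "card {q\<in>perms n. q i = j \<and> q k = l}
      = card {q. q permutes {..<n} \<and> q i = j \<and> (transpose i j \<circ> q) k = l'}"
    unfolding perms_def by simp
  also have "\<dots> = card {r. r permutes ({..<n} - {i}) \<and> r k = l'}"
    using card_permutes_with_value[of "{..<n}" i j "\<lambda>r. r k = l'"] assms by simp
  also have "\<dots> = card {r. r permutes ({..<n} - {i} - {k})}"
    using card_permutes_with_value[of "{..<n} - {i}" k l' "\<lambda>_. True"] assms l' by simp
  also have "\<dots> = fact (n - 2)"
    using assms by (simp add: card_permutations card_Diff_subset numeral_2_eq_2)
  finally show ?thesis .
qed

lemma permutes_avoiding:
  assumes fin: "finite X"
    and row: "\<forall>x\<in>X. card (X \<inter> B x) \<le> b"
    and col: "\<forall>y\<in>X. card {x\<in>X. y \<in> B x} \<le> b"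
    and big: "2 * b \<le> card X"
  shows "\<exists>\<sigma>. \<sigma> permutes X \<and> (\<forall>x\<in>X. \<sigma> x \<notin> B x)"
proof -
  define A where "A x = X - B x" for x
  have card_A: "card X - b \<le> card (A x)" if "x \<in> X" for x
    using row that fin unfolding A_def by (simp add: card_Diff_subset_Int diff_le_mono2)
  have A_sub: "\<forall>x\<in>X. A x \<subseteq> X" unfolding A_def by blast
  have hall: "hall_condition X A"
    unfolding hall_condition_def
  proof (intro allI impI)
    fix J assume J: "J \<subseteq> X"
    have finU: "finite (\<Union>(A ` J))" unfolding A_def using fin by auto
    consider "J = {}" | "J \<noteq> {}" "card J \<le> card X - b" | "card X - b < card J" by linarith
    then show "card J \<le> card (\<Union>(A ` J))"
    proof cases
      case 2
      then obtain x where "x \<in> J" by auto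
      then have "card (A x) \<le> card (\<Union>(A ` J))" using finU by (intro card_mono) auto
      moreover have "card X - b \<le> card (A x)" using card_A \<open>x \<in> J\<close> J by blast
      ultimately show ?thesis using 2 by linarith
    next
      case 3
      have "X \<subseteq> \<Union>(A ` J)"
      proof
        fix y assume y: "y \<in> X"
        have "card {x\<in>X. y \<in> B x} \<le> b" using col y by blast
        then have "card {x\<in>X. y \<in> B x} < card J" using 3 big by linarith
        then have "\<not> J \<subseteq> {x\<in>X. y \<in> B x}" using fin card_mono[of "{x\<in>X. y \<in> B x}" J] by auto
        then obtain x where "x \<in> J" "x \<notin> {x\<in>X. y \<in> B x}" by blast
        then show "y \<in> \<Union>(A ` J)" using J y unfolding A_def by auto
      qed
      then have "card X \<le> card (\<Union>(A ` J))" using finU by (rule card_mono[rotated])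
      moreover have "card J \<le> card X" using J fin by (rule card_mono[rotated])
      ultimately show ?thesis by linarith
    qed simp
  qed
  obtain \<sigma> where "\<sigma> permutes X" "\<forall>x\<in>X. \<sigma> x \<in> A x"
    using permutes_of_hall_condition[OF fin A_sub hall] by blast
  then show ?thesis unfolding A_def by blast
qed

definition perms_with_support :: "nat \<Rightarrow> nat set \<Rightarrow> (nat \<Rightarrow> nat) set" where
  "perms_with_support n X = {\<sigma> \<in> perms n. \<forall>x<n. \<sigma> x \<noteq> x \<longleftrightarrow> x \<in> X}"

lemma perms_with_support_nonempty:
  assumes X: "X \<subseteq> {..<n}" and card: "2 \<le> card X"
  shows "\<exists>\<sigma>. \<sigma> \<in> perms_with_support n X"
proof -
  have fin: "finite X" using X finite_subset by blast
  have "\<exists>\<sigma>. \<sigma> permutes X \<and> (\<forall>x\<in>X. \<sigma> x \<notin> {x})"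
    by (rule permutes_avoiding[OF fin, of _ 1]) (use card in \<open>auto simp: card_le_Suc0_iff_eq\<close>)
  then obtain \<sigma> where \<sigma>: "\<sigma> permutes X" "\<forall>x\<in>X. \<sigma> x \<noteq> x" by auto
  then have "\<sigma> \<in> perms n" unfolding perms_def using permutes_subset X by blast
  then show ?thesis
    using \<sigma> permutes_not_in[OF \<sigma>(1)] unfolding perms_with_support_def by blast
qed

lemma perms_with_support_perms: "\<sigma> \<in> perms_with_support n X \<Longrightarrow> \<sigma> \<in> perms n"
  unfolding perms_with_support_def by simp

lemma perms_with_support_moves:
  "\<sigma> \<in> perms_with_support n X \<Longrightarrow> x < n \<Longrightarrow> \<sigma> x \<noteq> x \<longleftrightarrow> x \<in> X"
  unfolding perms_with_support_def by blast

lemma perms_with_support_fixpoint: "\<sigma> \<in> perms_with_support n X \<Longrightarrow> x \<notin> X \<Longrightarrow> \<sigma> x = x"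
  using perms_with_support_moves perms_fixpoint perms_with_support_perms by (cases "x < n") blast+

lemma perms_with_support_maps_to:
  assumes \<sigma>: "\<sigma> \<in> perms_with_support n X" and X: "X \<subseteq> {..<n}" and x: "x \<in> X"
  shows "\<sigma> x \<in> X"
proof (rule ccontr)
  assume "\<sigma> x \<notin> X"
  then have "\<sigma> (\<sigma> x) = \<sigma> x" using perms_with_support_fixpoint[OF \<sigma>] by blast
  then have "\<sigma> x = x" using perms_eq_iff[OF perms_with_support_perms[OF \<sigma>]] by blast
  then show False using perms_with_support_moves[OF \<sigma>] x X by auto
qed

lemma perms_with_support_compose_complement:
  assumes X: "X \<subseteq> {..<n}" and \<sigma>: "\<sigma> \<in> perms_with_support n X"
    and \<tau>: "\<tau> \<in> perms_with_support n ({..<n} - X)" and i: "i < n"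
  shows "\<sigma> (\<tau> i) \<noteq> i" "\<sigma> (\<tau> i) \<in> X \<longleftrightarrow> i \<in> X"
proof -
  have "\<sigma> (\<tau> i) \<noteq> i \<and> (\<sigma> (\<tau> i) \<in> X \<longleftrightarrow> i \<in> X)"
  proof (cases "i \<in> X")
    case True
    then show ?thesis
      using perms_with_support_fixpoint[OF \<tau>] perms_with_support_moves[OF \<sigma> i]
        perms_with_support_maps_to[OF \<sigma> X] by simp
  next
    case False
    then have "\<tau> i \<in> {..<n} - X" "\<tau> i \<noteq> i"
      using perms_with_support_maps_to[OF \<tau>, of i] perms_with_support_moves[OF \<tau> i] i by auto
    then show ?thesis using perms_with_support_fixpoint[OF \<sigma>, of "\<tau> i"] False by auto
  qed
  then show "\<sigma> (\<tau> i) \<noteq> i" "\<sigma> (\<tau> i) \<in> X \<longleftrightarrow> i \<in> X" by auto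
qed

lemma card_insert_le_Suc: "finite A \<Longrightarrow> card (insert x A) \<le> Suc (card A)"
  by (simp add: card_insert_if)

lemma ex_less_notin: "finite B \<Longrightarrow> card B < n \<Longrightarrow> \<exists>x<n. x \<notin> B"
  by (metis card_lessThan card_mono finite_lessThan lessThan_iff not_le subsetI)

lemma card_lessThan_Diff: "X \<subseteq> {..<n::nat} \<Longrightarrow> card ({..<n} - X) = n - card X"
  by (metis card_Diff_subset card_lessThan finite_lessThan finite_subset)

definition admissible :: "nat \<Rightarrow> nat set \<Rightarrow> bool" where
  "admissible n X \<longleftrightarrow> X \<subseteq> {..<n} \<and> 2 \<le> card X \<and> card X + 2 \<le> n"

lemma admissible_complement: "admissible n X \<Longrightarrow> admissible n ({..<n} - X)"
  unfolding admissible_def using card_lessThan_Diff[of X n] by auto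

text \<open>\<open>F X\<close> abstracts whether the permutations with support \<open>X\<close> lie in a maximum coclique
  through the identity; the axioms are the relations established for it below.\<close>

locale support_profile =
  fixes F :: "nat set \<Rightarrow> nat" and n :: nat
  assumes n: "7 \<le> n"
    and F_le_1: "F X \<le> 1"
    and F_complement: "admissible n X \<Longrightarrow> F X + F ({..<n} - X) = 1"
    and F_switch: "\<lbrakk>B \<subseteq> {..<n}; 2 \<le> card B; card B + 4 \<le> n;
      a < n; b < n; a \<notin> B; b \<notin> B; a \<noteq> b\<rbrakk> \<Longrightarrow> F {a, b} + F B = F (insert a (insert b B)) + 1"
    and F_cover: "\<lbrakk>admissible n A; admissible n B; A \<union> B = {..<n}; A \<inter> B = {x}; F A = 1; F B = 1\<rbrakk>
      \<Longrightarrow> False"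
begin

lemma F_cases: "F X = 0 \<or> F X = 1"
  using F_le_1[of X] by auto

lemma F_pair_if_zero:
  assumes "B \<subseteq> {..<n}" "2 \<le> card B" "card B + 4 \<le> n" "F B = 0"
    "a < n" "b < n" "a \<notin> B" "b \<notin> B" "a \<noteq> b"
  shows "F {a, b} = 1"
  using F_switch[of B a b] F_le_1[of "{a, b}"] assms by simp

lemma F_insert_pair_if_one:
  assumes "B \<subseteq> {..<n}" "2 \<le> card B" "card B + 4 \<le> n" "F B = 1"
    "a < n" "b < n" "a \<notin> B" "b \<notin> B" "a \<noteq> b"
  shows "F (insert a (insert b B)) = F {a, b}"
  using F_switch[of B a b] assms by simp

lemma disjoint_pairs_not_both_zero:
  assumes "a < n" "b < n" "c < n" "d < n" "a \<noteq> b" "c \<noteq> d" "a \<noteq> c" "a \<noteq> d" "b \<noteq> c" "b \<noteq> d"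
    "F {a, b} = 0" "F {c, d} = 0"
  shows False
  using F_pair_if_zero[of "{c, d}" a b] assms n by auto

lemma F_even_eq_1:
  assumes pairs: "\<And>a b. a < n \<Longrightarrow> b < n \<Longrightarrow> a \<noteq> b \<Longrightarrow> F {a, b} = 1"
  shows "X \<subseteq> {..<n} \<Longrightarrow> card X = 2 * (k + 1) \<Longrightarrow> card X + 2 \<le> n \<Longrightarrow> F X = 1"
proof (induction k arbitrary: X)
  case 0
  then obtain a b where "X = {a, b}" "a \<noteq> b" by (auto simp: card_2_iff)
  then show ?case using pairs 0 by auto
next
  case (Suc k)
  have finX: "finite X" using Suc.prems(1) finite_subset by blast
  have "1 < card X" using Suc.prems(2) by simp
  then obtain a b where ab: "a \<in> X" "b \<in> X" "a \<noteq> b"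
    using card_le_Suc0_iff_eq[OF finX] by (metis One_nat_def not_le)
  define B where "B = X - {a, b}"
  have card_B: "card B = 2 * (k + 1)" unfolding B_def using Suc.prems(2) ab finX
    by (simp add: card_Diff_subset)
  have B: "B \<subseteq> {..<n}" unfolding B_def using Suc.prems(1) by auto
  have "F B = 1" using Suc.IH[OF B card_B] card_B Suc.prems(2,3) by simp
  moreover have "X = insert a (insert b B)" unfolding B_def using ab by auto
  moreover have "F {a, b} = 1" using pairs ab Suc.prems(1) by auto
  ultimately show ?case using F_insert_pair_if_one[of B a b] B card_B Suc.prems ab
    unfolding B_def by auto
qed

text \<open>Otherwise switching gives the value \<open>1\<close> to every admissible set of even size, contradicting
  complementation if \<open>n\<close> is even and the cover axiom if \<open>n\<close> is odd.\<close>

lemma ex_pair_zero: "\<exists>a b. a < n \<and> b < n \<and> a \<noteq> b \<and> F {a, b} = 0"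
proof (rule ccontr)
  assume "\<not> ?thesis"
  then have pairs: "\<And>a b. a < n \<Longrightarrow> b < n \<Longrightarrow> a \<noteq> b \<Longrightarrow> F {a, b} = 1" using F_cases by blast
  show False
  proof (cases "even n")
    case True
    have "admissible n {0, 1}" unfolding admissible_def using n by auto
    moreover have "card ({..<n} - {0, 1}) = 2 * ((n - 4) div 2 + 1)"
      using True n by (simp add: card_Diff_subset)
    ultimately show False
      using F_complement[of "{0, 1}"] F_even_eq_1[OF pairs, of "{..<n} - {0, 1}"] pairs[of 0 1] n by simp
  next
    case False
    define A where "A = {0::nat, 1, 2, 3}"
    define B where "B = {3::nat..<n}"
    have "A \<subseteq> {..<n}" "card A = 2 * (1 + 1)" "card A + 2 \<le> n"
      unfolding A_def using n by auto
    then have "F A = 1" using F_even_eq_1[OF pairs] by blast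
    have "B \<subseteq> {..<n}" "card B = 2 * ((n - 5) div 2 + 1)" "card B + 2 \<le> n"
      unfolding B_def using False n by auto
    then have "F B = 1" using F_even_eq_1[OF pairs] by blast
    moreover have "admissible n A" "admissible n B" "A \<union> B = {..<n}" "A \<inter> B = {3}"
      unfolding admissible_def A_def B_def using n by auto
    ultimately show False using F_cover \<open>F A = 1\<close> by blast
  qed
qed

lemma F_quadruple_if_pair_zero:
  assumes "a < n" "b < n" "c < n" "d < n" "a \<noteq> b" "c \<noteq> d" "a \<noteq> c" "a \<noteq> d" "b \<noteq> c" "b \<noteq> d"
    "F {a, b} = 0"
  shows "F {a, b, c, d} = 0"
proof -
  define Z where "Z = {..<n} - {a, b, c, d}"
  have "card {a, b, c, d} = 4" using assms by simp
  then have card_Z: "card Z = n - 4" unfolding Z_def using assms by (simp add: card_Diff_subset)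
  have "F Z \<noteq> 0"
  proof
    assume "F Z = 0"
    moreover have "Z \<subseteq> {..<n}" "a \<notin> Z" "b \<notin> Z" unfolding Z_def by auto
    moreover have "2 \<le> card Z" "card Z + 4 \<le> n" using card_Z n by auto
    ultimately have "F {a, b} = 1" using F_pair_if_zero[of Z a b] assms by simp
    then show False using assms by simp
  qed
  then have "F Z = 1" using F_cases[of Z] by auto
  moreover have "admissible n Z" unfolding admissible_def Z_def using card_Z n by (auto simp: Z_def)
  moreover have "{..<n} - Z = {a, b, c, d}" unfolding Z_def using assms by auto
  ultimately show ?thesis using F_complement[of Z] by simp
qed

lemma center_if_pair_zero:
  assumes ab: "a < n" "b < n" "a \<noteq> b" "F {a, b} = 0"
    and c: "c < n" "c \<noteq> a" "c \<noteq> b" "F {a, c} = 1"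
  shows "\<forall>x<n. x \<noteq> b \<longrightarrow> F {b, x} = 0"
proof -
  have b_d: "F {b, d} = 0" if d: "d < n" "d \<noteq> a" "d \<noteq> b" "d \<noteq> c" for d
  proof -
    have "F (insert b (insert d {a, c})) = F {b, d}"
      by (rule F_insert_pair_if_one) (use ab c d n in auto)
    moreover have "F {a, b, c, d} = 0" by (rule F_quadruple_if_pair_zero) (use ab c d in auto)
    ultimately show ?thesis by (simp add: insert_commute)
  qed
  have "F {b, c} = 0"
  proof (rule ccontr)
    assume "F {b, c} \<noteq> 0"
    then have "F {b, c} = 1" using F_cases[of "{b, c}"] by auto
    then have a_d: "F {a, d} = 0" if d: "d < n" "d \<noteq> a" "d \<noteq> b" "d \<noteq> c" for d
      using F_insert_pair_if_one[of "{b, c}" a d] F_quadruple_if_pair_zero[of b a c d] ab c d n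
      by (auto simp: insert_commute)
    obtain d1 where d1: "d1 < n" "d1 \<notin> {a, b, c}"
      using ex_less_notin[of "{a, b, c}" n] card_length[of "[a, b, c]"] n by auto
    obtain d2 where d2: "d2 < n" "d2 \<notin> {a, b, c, d1}"
      using ex_less_notin[of "{a, b, c, d1}" n] card_length[of "[a, b, c, d1]"] n by auto
    show False using disjoint_pairs_not_both_zero[of a d1 b d2] a_d[of d1] b_d[of d2] ab d1 d2 by auto
  qed
  then show ?thesis using ab b_d by (metis insert_commute)
qed

lemma ex_center: "\<exists>i0<n. \<forall>x<n. x \<noteq> i0 \<longrightarrow> F {i0, x} = 0"
proof -
  obtain a b where ab: "a < n" "b < n" "a \<noteq> b" "F {a, b} = 0" using ex_pair_zero by blast
  show ?thesis
  proof (cases "\<exists>c<n. c \<noteq> a \<and> c \<noteq> b \<and> F {a, c} = 1")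
    case True
    then show ?thesis using center_if_pair_zero[OF ab] ab(2) by blast
  next
    case False
    then have "\<forall>x<n. x \<noteq> a \<longrightarrow> F {a, x} = 0" using ab(4) F_cases by blast
    then show ?thesis using ab(1) by blast
  qed
qed

context
  fixes i0 assumes i0: "i0 < n" and center: "\<forall>x<n. x \<noteq> i0 \<longrightarrow> F {i0, x} = 0"
begin

lemma F_pair_off_center:
  assumes "x < n" "y < n" "x \<noteq> y" "x \<noteq> i0" "y \<noteq> i0"
  shows "F {x, y} = 1"
proof (rule ccontr)
  assume "F {x, y} \<noteq> 1"
  then have "F {x, y} = 0" using F_cases[of "{x, y}"] by auto
  moreover obtain z where z: "z < n" "z \<notin> {x, y, i0}"
    using ex_less_notin[of "{x, y, i0}" n] card_length[of "[x, y, i0]"] n by auto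
  ultimately show False using disjoint_pairs_not_both_zero[of x y i0 z] center assms i0 by auto
qed

lemma F_small_off_center:
  assumes X: "X \<subseteq> {..<n}" "i0 \<notin> X" "2 \<le> card X" "card X + 4 \<le> n"
  shows "F X = 1"
proof (rule ccontr)
  assume "F X \<noteq> 1"
  then have "F X = 0" using F_cases[of X] by auto
  moreover obtain z where z: "z < n" "z \<notin> insert i0 X"
    using ex_less_notin[of "insert i0 X" n] card_insert_le_Suc[of X i0] X finite_subset by fastforce
  ultimately have "F {i0, z} = 1" using F_pair_if_zero[OF X(1,3,4)] X(2) i0 by auto
  then show False using center z by auto
qed

lemma F_triple_center:
  assumes Y: "Y \<subseteq> {..<n}" "i0 \<in> Y" "card Y = 3"
  shows "F Y = 0"
proof (rule ccontr)
  assume "F Y \<noteq> 0"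
  then have F_Y: "F Y = 1" using F_cases[of Y] by auto
  have finY: "finite Y" using Y(1) finite_subset by blast
  obtain a where a: "a < n" "a \<notin> Y" using ex_less_notin[of Y n] finY Y n by auto
  obtain b where b: "b < n" "b \<notin> insert a Y"
    using ex_less_notin[of "insert a Y" n] finY Y n card_insert_le_Suc[of Y a] by auto
  define W where "W = {..<n} - insert a (insert b Y)"
  have sub: "insert a (insert b Y) \<subseteq> {..<n}" using a b Y by auto
  have "card (insert a (insert b Y)) = 5" using a b Y finY by simp
  then have card_W: "card W = n - 5" unfolding W_def using card_lessThan_Diff[OF sub] by simp
  have "F W = 1" by (rule F_small_off_center) (use card_W n Y in \<open>auto simp: W_def\<close>)
  moreover have "admissible n W" unfolding admissible_def W_def using card_W n by (auto simp: W_def)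
  moreover have "{..<n} - W = insert a (insert b Y)" unfolding W_def using sub by auto
  ultimately have "F (insert a (insert b Y)) = 0" using F_complement[of W] by simp
  moreover have "F (insert a (insert b Y)) = F {a, b}"
    by (rule F_insert_pair_if_one) (use Y a b F_Y n in auto)
  moreover have "F {a, b} = 1" using F_pair_off_center[of a b] a b Y by auto
  ultimately show False by simp
qed

lemma F_off_center:
  assumes X: "admissible n X" "i0 \<notin> X"
  shows "F X = 1"
proof (cases "card X + 4 \<le> n")
  case True then show ?thesis using F_small_off_center X unfolding admissible_def by blast
next
  case False
  define Y where "Y = {..<n} - X"
  have card_Y: "card Y = n - card X" and "i0 \<in> Y"
    unfolding Y_def using X i0 card_lessThan_Diff[of X n] unfolding admissible_def by auto
  have "F Y = 0"
  proof (cases "card Y = 2")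
    case True
    then obtain u where "Y = {i0, u}" "u \<noteq> i0"
      using \<open>i0 \<in> Y\<close> by (auto simp: card_2_iff doubleton_eq_iff)
    moreover have "u < n" using \<open>Y = {i0, u}\<close> unfolding Y_def by auto
    ultimately show ?thesis using center by simp
  next
    case False
    have "card X + 2 \<le> n" using X(1) unfolding admissible_def by simp
    then have "card Y + card X = n" using card_Y by simp
    then have "card Y = 3" using False \<open>card X + 2 \<le> n\<close> \<open>\<not> card X + 4 \<le> n\<close> by linarith
    moreover have "Y \<subseteq> {..<n}" unfolding Y_def by blast
    ultimately show ?thesis using F_triple_center \<open>i0 \<in> Y\<close> by blast
  qed
  then show ?thesis using F_complement[OF X(1)] unfolding Y_def by simp
qed

lemma F_on_center:
  assumes "admissible n X" "i0 \<in> X"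
  shows "F X = 0"
  using F_off_center[of "{..<n} - X"] F_complement[of X] admissible_complement[of n X] assms by simp

end

theorem F_eq_center_indicator:
  "\<exists>i0<n. \<forall>X. admissible n X \<longrightarrow> F X = (if i0 \<in> X then 0 else 1)"
proof -
  obtain i0 where i0: "i0 < n" and center: "\<forall>x<n. x \<noteq> i0 \<longrightarrow> F {i0, x} = 0"
    using ex_center by blast
  have "F X = (if i0 \<in> X then 0 else 1)" if "admissible n X" for X
    using F_off_center[OF i0 center that] F_on_center[OF i0 center that] by simp
  then show ?thesis using i0 by blast
qed

end

lemma transpose_perms: "a < n \<Longrightarrow> b < n \<Longrightarrow> transpose a b \<in> perms n"
  unfolding perms_def by (simp add: permutes_swap_id)

lemma transpose_perms_with_support:
  "a < n \<Longrightarrow> b < n \<Longrightarrow> a \<noteq> b \<Longrightarrow> transpose a b \<in> perms_with_support n {a, b}"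
  unfolding perms_with_support_def by (auto simp: transpose_perms transpose_def)

lemma transpose_compose_perms_with_support:
  assumes \<sigma>: "\<sigma> \<in> perms_with_support n X" and X: "X \<subseteq> {..<n}"
    and x: "x \<in> X" and y: "y < n" "y \<notin> X"
  shows "transpose x y \<circ> \<sigma> \<in> perms_with_support n (insert y X)"
proof -
  have "transpose x y \<circ> \<sigma> \<in> perms n"
    using \<sigma> x X y by (intro perms_compose transpose_perms perms_with_support_perms) auto
  moreover have "(transpose x y \<circ> \<sigma>) z \<noteq> z \<longleftrightarrow> z \<in> insert y X" if "z < n" for z
  proof (cases "z \<in> X")
    case True
    then have "\<sigma> z \<in> X" "\<sigma> z \<noteq> z"
      using perms_with_support_maps_to[OF \<sigma> X] perms_with_support_moves[OF \<sigma> that] by auto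
    then show ?thesis using True y by (auto simp: transpose_def)
  next
    case False
    then show ?thesis using perms_with_support_fixpoint[OF \<sigma> False] x y by (auto simp: transpose_def)
  qed
  ultimately show ?thesis unfolding perms_with_support_def by blast
qed

lemma transpose_compose_complement_no_fixpoint:
  assumes X: "X \<subseteq> {..<n}" and \<sigma>: "\<sigma> \<in> perms_with_support n X"
    and \<tau>: "\<tau> \<in> perms_with_support n ({..<n} - X)" and "a \<in> X" "b \<notin> X"
  shows "\<forall>i<n. (transpose a b \<circ> \<sigma> \<circ> \<tau>) i \<noteq> i"
  using perms_with_support_compose_complement[OF X \<sigma> \<tau>] assms(4,5) by (auto simp: transpose_def)

lemma perm_independent_switch_support:
  assumes S: "perm_independent n S" "card S = fact (n - 1)" and n: "2 \<le> n"
    and g: "g \<in> perms n" and X: "X \<subseteq> {..<n}"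
    and \<sigma>: "\<sigma> \<in> perms_with_support n X" and \<tau>: "\<tau> \<in> perms_with_support n ({..<n} - X)"
  shows "indicator S g + indicator S (g \<circ> \<sigma> \<circ> \<tau>)
    = (indicator S (g \<circ> \<sigma>) + indicator S (g \<circ> \<tau>) :: nat)"
proof (rule perm_independent_switch[OF S n g])
  have perms: "\<sigma> \<in> perms n" "\<tau> \<in> perms n" using \<sigma> \<tau> by (simp_all add: perms_with_support_perms)
  then show "g \<circ> \<sigma> \<circ> \<tau> \<in> perms n" "g \<circ> \<sigma> \<in> perms n" "g \<circ> \<tau> \<in> perms n"
    using g by (simp_all add: perms_compose)
  show "perm_adj n g (g \<circ> \<sigma> \<circ> \<tau>)"
    using perms_with_support_compose_complement(1)[OF X \<sigma> \<tau>] perms_eq_iff[OF g]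
    unfolding perm_adj_def by (metis comp_apply)
  have "\<tau> i = i" if "i \<in> X" for i using perms_with_support_fixpoint[OF \<tau>] that by blast
  moreover have "\<sigma> i = i" "\<sigma> (\<tau> i) = \<tau> i" if "i < n" "i \<notin> X" for i
    using perms_with_support_fixpoint[OF \<sigma>] perms_with_support_maps_to[OF \<tau>, of i] that by auto
  ultimately show "\<forall>i<n. ((g \<circ> \<sigma>) i = g i \<and> (g \<circ> \<tau>) i = (g \<circ> \<sigma> \<circ> \<tau>) i) \<or>
      ((g \<circ> \<sigma>) i = (g \<circ> \<sigma> \<circ> \<tau>) i \<and> (g \<circ> \<tau>) i = g i)"
    by (metis comp_apply)
qed

lemma ex_perms_with_support_adj:
  assumes p: "p \<in> perms n" and i: "i < n" "p i \<noteq> i" and n: "6 \<le> n"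
  shows "\<exists>\<sigma>\<in>perms_with_support n ({..<n} - {i, p i}). perm_adj n \<sigma> p"
proof -
  define X where "X = {..<n} - {i, p i}"
  have X: "X \<subseteq> {..<n}" "finite X" unfolding X_def by auto
  have "card X = n - 2" unfolding X_def using i perms_less[OF p i(1)] by (simp add: card_Diff_subset)
  then have "2 * 2 \<le> card X" using n by simp
  moreover have "card (X \<inter> {x, p x}) \<le> 2" for x
  proof -
    have "card (X \<inter> {x, p x}) \<le> card {x, p x}" by (intro card_mono) auto
    then show ?thesis by (simp add: card_insert_if split: if_splits)
  qed
  moreover have "card {x\<in>X. y \<in> {x, p x}} \<le> 2" for y
  proof -
    have "{x\<in>X. y \<in> {x, p x}} \<subseteq> {y, inv p y}" using perms_inverses(2)[OF p] by auto
    then have "card {x\<in>X. y \<in> {x, p x}} \<le> card {y, inv p y}" by (intro card_mono) auto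
    then show ?thesis by (simp add: card_insert_if split: if_splits)
  qed
  ultimately obtain \<sigma> where \<sigma>: "\<sigma> permutes X" "\<forall>x\<in>X. \<sigma> x \<notin> {x, p x}"
    using permutes_avoiding[OF X(2), of "\<lambda>x. {x, p x}" 2] by blast
  have "\<sigma> \<in> perms n" using permutes_subset[OF \<sigma>(1) X(1)] unfolding perms_def by simp
  moreover have "\<sigma> x \<noteq> x \<longleftrightarrow> x \<in> X" for x using \<sigma> permutes_not_in[OF \<sigma>(1)] by blast
  ultimately have "\<sigma> \<in> perms_with_support n X" unfolding perms_with_support_def by blast
  moreover have "\<sigma> x \<noteq> p x" if "x < n" for x
  proof (cases "x \<in> X")
    case False
    then have "x = i \<or> x = p i" "\<sigma> x = x" using that permutes_not_in[OF \<sigma>(1)] unfolding X_def by auto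
    then show ?thesis using i perms_eq_iff[OF p, of "p i" i] by auto
  qed (use \<sigma>(2) in blast)
  ultimately show ?thesis unfolding X_def perm_adj_def by blast
qed

locale coclique_through_id =
  fixes n :: nat and S :: "(nat \<Rightarrow> nat) set"
  assumes n: "7 \<le> n" and S: "perm_independent n S" and card_S: "card S = fact (n - 1)"
    and id_in_S: "id \<in> S"
begin

text \<open>Membership in \<open>S\<close> of a permutation with admissible support \<open>X\<close> depends only on \<open>X\<close>
  (\<open>indicator_eq_support_value\<close>), so the choice of representative is irrelevant.\<close>

definition support_value :: "nat set \<Rightarrow> nat" where
  "support_value X = indicator S (SOME \<sigma>. \<sigma> \<in> perms_with_support n X)"

lemma derangement_notin:
  assumes "d \<in> perms n" "\<forall>i<n. d i \<noteq> i"
  shows "d \<notin> S"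
proof
  assume "d \<in> S"
  moreover have "perm_adj n id d" using assms(2) unfolding perm_adj_def by (simp add: eq_commute)
  moreover have "id \<noteq> d" using assms(2)[rule_format, of 0] n by auto
  ultimately show False using S id_in_S unfolding perm_independent_def by blast
qed

lemma some_perms_with_support:
  "admissible n X \<Longrightarrow> (SOME \<sigma>. \<sigma> \<in> perms_with_support n X) \<in> perms_with_support n X"
  unfolding admissible_def using perms_with_support_nonempty[of X n] by (metis someI_ex)

lemma indicator_support_complement:
  assumes X: "admissible n X" and \<sigma>: "\<sigma> \<in> perms_with_support n X"
    and \<tau>: "\<tau> \<in> perms_with_support n ({..<n} - X)"
  shows "indicator S \<sigma> + indicator S \<tau> = (1 :: nat)"
proof -
  have X_sub: "X \<subseteq> {..<n}" using X unfolding admissible_def by simp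
  have "\<sigma> \<circ> \<tau> \<notin> S"
    using derangement_notin perms_with_support_compose_complement(1)[OF X_sub \<sigma> \<tau>]
      perms_compose perms_with_support_perms \<sigma> \<tau> by auto
  then show ?thesis
    using perm_independent_switch_support[OF S card_S _ perms_id X_sub \<sigma> \<tau>] n id_in_S by simp
qed

lemma indicator_eq_support_value:
  assumes "admissible n X" "\<sigma> \<in> perms_with_support n X"
  shows "indicator S \<sigma> = support_value X"
  using indicator_support_complement[OF assms some_perms_with_support]
    indicator_support_complement[OF assms(1) some_perms_with_support[OF assms(1)] some_perms_with_support]
    admissible_complement[OF assms(1)]
  unfolding support_value_def by simp

lemma support_value_complement:
  "admissible n X \<Longrightarrow> support_value X + support_value ({..<n} - X) = 1"
  using indicator_support_complement some_perms_with_support admissible_complement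
  unfolding support_value_def by blast

lemma support_value_switch:
  assumes B: "B \<subseteq> {..<n}" "2 \<le> card B" "card B + 4 \<le> n"
    and ab: "a < n" "b < n" "a \<notin> B" "b \<notin> B" "a \<noteq> b"
  shows "support_value {a, b} + support_value B = support_value (insert a (insert b B)) + 1"
proof -
  define A where "A = insert a B"
  have fin_B: "finite B" using B(1) finite_subset by blast
  have A: "A \<subseteq> {..<n}" "a \<in> A" "b \<notin> A" unfolding A_def using B(1) ab by auto
  have "admissible n A" unfolding admissible_def A_def using A B ab fin_B by auto
  then obtain \<sigma> \<tau> where \<sigma>: "\<sigma> \<in> perms_with_support n A"
    and \<tau>: "\<tau> \<in> perms_with_support n ({..<n} - A)"
    using some_perms_with_support admissible_complement by blast
  define t where "t = transpose a b"
  have t: "t \<in> perms n" unfolding t_def using ab by (simp add: transpose_perms)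
  have "t \<circ> \<sigma> \<circ> \<tau> \<notin> S"
    using derangement_notin t \<sigma> \<tau> transpose_compose_complement_no_fixpoint[OF A(1) \<sigma> \<tau> A(2,3)]
    unfolding t_def by (simp add: perms_with_support_perms perms_compose)
  moreover have "indicator S t = support_value {a, b}"
    using indicator_eq_support_value transpose_perms_with_support[OF ab(1,2,5)] ab n
    unfolding admissible_def t_def by auto
  moreover have "indicator S (t \<circ> \<sigma>) = support_value (insert a (insert b B))"
  proof -
    have "t \<circ> \<sigma> \<in> perms_with_support n (insert a (insert b B))"
      using transpose_compose_perms_with_support[OF \<sigma> A(1,2) ab(2) A(3)]
      unfolding t_def A_def by (simp add: insert_commute)
    moreover have "admissible n (insert a (insert b B))"
      unfolding admissible_def using B ab fin_B by auto
    ultimately show ?thesis using indicator_eq_support_value by simp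
  qed
  moreover have "indicator S (t \<circ> \<tau>) + support_value B = 1"
  proof -
    have "insert a ({..<n} - A) = {..<n} - B" unfolding A_def using ab by auto
    then have "t \<circ> \<tau> \<in> perms_with_support n ({..<n} - B)"
      using transpose_compose_perms_with_support[OF \<tau> _ _ ab(1), of b] A ab(2)
      unfolding t_def by (simp add: transpose_commute)
    moreover have "admissible n B" unfolding admissible_def using B by simp
    ultimately show ?thesis
      using indicator_eq_support_value[of "{..<n} - B"] support_value_complement[of B]
        admissible_complement[of n B] by simp
  qed
  ultimately show ?thesis
    using perm_independent_switch_support[OF S card_S _ t A(1) \<sigma> \<tau>] n by simp
qed

lemma indicator_eq_1_iff: "indicator S p = (1 :: nat) \<longleftrightarrow> p \<in> S"
  by (simp add: indicator_def)

lemma support_value_cover: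
  assumes A: "admissible n A" and B: "admissible n B"
    and cover: "A \<union> B = {..<n}" "A \<inter> B = {x}"
    and ones: "support_value A = 1" "support_value B = 1"
  shows False
proof -
  obtain \<sigma> where \<sigma>: "\<sigma> \<in> perms_with_support n A" using some_perms_with_support[OF A] by blast
  obtain \<rho> where \<rho>: "\<rho> \<in> perms_with_support n B" using some_perms_with_support[OF B] by blast
  have "indicator S \<sigma> = (1 :: nat)" "indicator S \<rho> = (1 :: nat)"
    using indicator_eq_support_value[OF A \<sigma>] indicator_eq_support_value[OF B \<rho>] ones by simp_all
  then have in_S: "\<sigma> \<in> S" "\<rho> \<in> S" by (simp_all only: indicator_eq_1_iff)
  have sub: "A \<subseteq> {..<n}" "B \<subseteq> {..<n}" using A B unfolding admissible_def by auto
  have "\<sigma> i \<noteq> \<rho> i" if i: "i < n" for i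
  proof (cases "i = x")
    case True
    then have "i \<in> A" "i \<in> B" using cover(2) by auto
    then have "\<sigma> i \<in> A" "\<sigma> i \<noteq> i" "\<rho> i \<in> B"
      using perms_with_support_maps_to[OF \<sigma> sub(1)] perms_with_support_maps_to[OF \<rho> sub(2)]
        perms_with_support_moves[OF \<sigma> i] by simp_all
    then have "\<sigma> i = \<rho> i \<Longrightarrow> \<sigma> i \<in> A \<inter> B" by simp
    then show ?thesis using cover(2) True \<open>\<sigma> i \<noteq> i\<close> by auto
  next
    case False
    then have "i \<in> A \<and> i \<notin> B \<or> i \<in> B \<and> i \<notin> A" using cover i by blast
    then show ?thesis
      using perms_with_support_moves[OF \<sigma> i] perms_with_support_moves[OF \<rho> i] by auto
  qed
  then have "perm_adj n \<sigma> \<rho>" unfolding perm_adj_def by blast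
  moreover have "\<sigma> \<noteq> \<rho>" using \<open>perm_adj n \<sigma> \<rho>\<close> perm_adj_irrefl[of n \<sigma>] n by auto
  ultimately show False using S in_S unfolding perm_independent_def by blast
qed

sublocale support_profile support_value n
proof
  show "7 \<le> n" by (rule n)
  show "support_value X \<le> 1" for X unfolding support_value_def by (simp add: indicator_def)
  show "support_value X + support_value ({..<n} - X) = 1" if "admissible n X" for X
    using that by (rule support_value_complement)
  show "support_value {a, b} + support_value B = support_value (insert a (insert b B)) + 1"
    if "B \<subseteq> {..<n}" "2 \<le> card B" "card B + 4 \<le> n" "a < n" "b < n" "a \<notin> B" "b \<notin> B" "a \<noteq> b"
    for B a b using that by (rule support_value_switch)
  show False if "admissible n A" "admissible n B" "A \<union> B = {..<n}" "A \<inter> B = {x}"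
    "support_value A = 1" "support_value B = 1" for A B x
    using that by (rule support_value_cover)
qed

text \<open>If some \<open>p \<in> S\<close> moved the centre \<open>i0\<close>, a permutation supported off \<open>{i0, p i0}\<close> and
  adjacent to \<open>p\<close> would have value \<open>1\<close>, i.e. lie in \<open>S\<close>.\<close>

lemma S_eq_stabilizer: "\<exists>i0<n. S = {p\<in>perms n. p i0 = i0}"
proof -
  obtain i0 where i0: "i0 < n" and profile: "\<forall>X. admissible n X \<longrightarrow> support_value X = (if i0 \<in> X then 0 else 1)"
    using F_eq_center_indicator by blast
  have "p i0 = i0" if p: "p \<in> S" for p
  proof (rule ccontr)
    assume moved: "p i0 \<noteq> i0"
    have p_perms: "p \<in> perms n" using p S unfolding perm_independent_def by blast
    define X where "X = {..<n} - {i0, p i0}"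
    obtain \<sigma> where \<sigma>: "\<sigma> \<in> perms_with_support n X" "perm_adj n \<sigma> p"
      using ex_perms_with_support_adj[OF p_perms i0 moved] n unfolding X_def by auto
    have "card X = n - 2" unfolding X_def using i0 perms_less[OF p_perms i0] moved
      by (simp add: card_Diff_subset)
    then have "2 \<le> card X" "card X + 2 \<le> n" using n by presburger+
    moreover have "X \<subseteq> {..<n}" unfolding X_def by blast
    ultimately have "admissible n X" unfolding admissible_def by simp
    then have "indicator S \<sigma> = (1 :: nat)"
      using indicator_eq_support_value[OF _ \<sigma>(1)] profile unfolding X_def by simp
    then have "\<sigma> \<in> S" by (simp only: indicator_eq_1_iff)
    moreover have "\<sigma> \<noteq> p"
    proof
      assume "\<sigma> = p"
      then show False using \<sigma>(2) perm_adj_irrefl[of n p] n by simp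
    qed
    ultimately show False using S p \<sigma>(2) unfolding perm_independent_def by blast
  qed
  then have "S \<subseteq> {p\<in>perms n. p i0 = i0}" using S unfolding perm_independent_def by blast
  moreover have "card S = card {p\<in>perms n. p i0 = i0}" using card_perms_value[OF i0 i0] card_S by simp
  ultimately have "S = {p\<in>perms n. p i0 = i0}" using finite_perms by (intro card_subset_eq) auto
  then show ?thesis using i0 by blast
qed

end

lemma perm_independent_translate:
  assumes S: "perm_independent n S" and g: "g \<in> perms n"
  shows "perm_independent n ((\<circ>) g ` S)"
  using assms unfolding perm_independent_def perm_adj_def by (auto simp: perms_compose perms_eq_iff)

text \<open>Translating \<open>S\<close> so that it contains the identity reduces to the stabilizer case.\<close>

theorem perm_independent_max_eq_coset:
  assumes n: "7 \<le> n" and S: "perm_independent n S" and card_S: "card S = fact (n - 1)"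
  shows "\<exists>i j. i < n \<and> j < n \<and> S = {p\<in>perms n. p i = j}"
proof -
  have S_perms: "S \<subseteq> perms n" using S unfolding perm_independent_def by simp
  obtain p0 where p0: "p0 \<in> S" using card_S by fastforce
  then have p0_perms: "p0 \<in> perms n" "inv p0 \<in> perms n" using S_perms perms_inv by auto
  define S' where "S' = (\<circ>) (inv p0) ` S"
  have "inv p0 \<circ> p0 = id" using p0_perms(1) unfolding perms_def by (simp add: permutes_inv_o)
  then have "id \<in> S'" unfolding S'_def using p0 by (metis image_eqI)
  moreover have "card S' = fact (n - 1)"
    unfolding S'_def using card_S card_image[OF inj_on_perms_compose_left[OF p0_perms(2), of S]] by simp
  ultimately interpret S': coclique_through_id n S'
    using n perm_independent_translate[OF S p0_perms(2)] unfolding S'_def by unfold_locales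
  obtain i0 where i0: "i0 < n" and S': "S' = {p\<in>perms n. p i0 = i0}" using S'.S_eq_stabilizer by blast
  have "q i0 = p0 i0" if "q \<in> S" for q
  proof -
    have "inv p0 \<circ> q \<in> S'" unfolding S'_def using that by blast
    then have "inv p0 (q i0) = i0" using S' by simp
    then show ?thesis using perms_inv_eq_iff[OF p0_perms(1)] by simp
  qed
  then have "S \<subseteq> {p\<in>perms n. p i0 = p0 i0}" using S_perms by blast
  moreover have "card S = card {p\<in>perms n. p i0 = p0 i0}"
    using card_perms_value[OF i0 perms_less[OF p0_perms(1) i0]] card_S by simp
  ultimately have "S = {p\<in>perms n. p i0 = p0 i0}" using finite_perms by (intro card_subset_eq) auto
  then show ?thesis using i0 perms_less[OF p0_perms(1) i0] by blast
qed

lemma card_filter_eq_sum: "finite A \<Longrightarrow> card {x\<in>A. P x} = (\<Sum>x\<in>A. if P x then 1 else 0)"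
  by (simp add: sum.If_cases Int_def)

lemma sum_card_coset_agree:
  assumes n: "2 \<le> n" and p: "p \<in> perms n" and i: "i < n" and j: "j < n"
  shows "(\<Sum>k<n. card {q\<in>perms n. q i = j \<and> q k = p k}) =
    (if p i = j then fact (n - 1) + (n - 1) * fact (n - 2) else (n - 2) * fact (n - 2))"
proof -
  define c where "c k = card {q\<in>perms n. q i = j \<and> q k = p k}" for k
  have generic: "c k = fact (n - 2)" if "k < n" "k \<noteq> i" "p k \<noteq> j" for k
    unfolding c_def using card_perms_two_values[OF i j that(1) perms_less[OF p that(1)]] that by simp
  have "(\<Sum>k<n. c k) = c i + (\<Sum>k\<in>{..<n} - {i}. c k)" using i by (simp add: sum.remove)
  moreover have "(\<Sum>k\<in>{..<n} - {i}. c k) = (n - 1) * fact (n - 2)" if "p i = j"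
  proof -
    have "p k \<noteq> j" if "k \<noteq> i" for k using that \<open>p i = j\<close> perms_eq_iff[OF p] by metis
    then have "(\<Sum>k\<in>{..<n} - {i}. c k) = (\<Sum>k\<in>{..<n} - {i}. fact (n - 2))"
      using generic by (intro sum.cong) auto
    then show ?thesis using i by simp
  qed
  moreover have "c i = (if p i = j then fact (n - 1) else 0)"
  proof (cases "p i = j")
    case True
    then have "{q\<in>perms n. q i = j \<and> q i = p i} = {q\<in>perms n. q i = j}" by auto
    then show ?thesis using True card_perms_value[OF i j] unfolding c_def by simp
  next
    case False
    then have empty: "{q\<in>perms n. q i = j \<and> q i = p i} = {}" by auto
    show ?thesis using False unfolding c_def empty by simp
  qed
  moreover have "(\<Sum>k\<in>{..<n} - {i}. c k) = (n - 2) * fact (n - 2)" if "p i \<noteq> j"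
  proof -
    define k0 where "k0 = inv p j"
    have k0: "k0 < n" "k0 \<noteq> i" "p k0 = j"
      unfolding k0_def using perms_less[OF perms_inv[OF p] j] perms_inverses(1)[OF p] that by auto
    have "c k0 = 0"
    proof -
      have empty: "{q\<in>perms n. q i = j \<and> q k0 = p k0} = {}" using k0 perms_eq_iff by fastforce
      show ?thesis unfolding c_def empty by simp
    qed
    moreover have "(\<Sum>k\<in>{..<n} - {i} - {k0}. c k) = (\<Sum>k\<in>{..<n} - {i} - {k0}. fact (n - 2))"
      using generic k0 perms_eq_iff[OF p] by (intro sum.cong) auto
    moreover have "(\<Sum>k\<in>{..<n} - {i}. c k) = c k0 + (\<Sum>k\<in>{..<n} - {i} - {k0}. c k)"
      using k0 by (simp add: sum.remove)
    ultimately show ?thesis using i k0 by (simp add: card_Diff_subset)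
  qed
  ultimately show ?thesis unfolding c_def by (cases "p i = j") simp_all
qed

lemma chi_std_inv_compose:
  "p \<in> perms n \<Longrightarrow> chi_std n (inv p \<circ> q) = real (card {k\<in>{..<n}. q k = p k}) - 1"
  unfolding chi_std_def by (simp add: perms_inv_eq_iff eq_commute[of "p _"])

lemma sum_agreements_coset:
  assumes n: "2 \<le> n" and p: "p \<in> perms n" and i: "i < n" and j: "j < n"
  shows "(\<Sum>q\<in>{q\<in>perms n. q i = j}. card {k\<in>{..<n}. q k = p k}) =
    (if p i = j then fact (n - 1) + (n - 1) * fact (n - 2) else (n - 2) * fact (n - 2))"
proof -
  define T where "T = {q\<in>perms n. q i = j}"
  have fin_T: "finite T" unfolding T_def using finite_perms by simp
  have "(\<Sum>q\<in>T. card {k\<in>{..<n}. q k = p k}) = (\<Sum>q\<in>T. \<Sum>k<n. if q k = p k then 1 else 0)"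
    by (intro sum.cong refl card_filter_eq_sum) simp
  also have "\<dots> = (\<Sum>k<n. \<Sum>q\<in>T. if q k = p k then 1 else 0)" by (rule sum.swap)
  also have "\<dots> = (\<Sum>k<n. card {q\<in>T. q k = p k})"
    using fin_T by (intro sum.cong refl card_filter_eq_sum[symmetric])
  also have "\<dots> = (if p i = j then fact (n - 1) + (n - 1) * fact (n - 2) else (n - 2) * fact (n - 2))"
  proof -
    have "{q\<in>T. q k = p k} = {q\<in>perms n. q i = j \<and> q k = p k}" for k unfolding T_def by auto
    then show ?thesis using sum_card_coset_agree[OF n p i j] by (simp only:)
  qed
  finally show ?thesis unfolding T_def .
qed

lemma sum_E_std_indicator_coset:
  assumes p: "p \<in> perms n" and i: "i < n" and j: "j < n"
  shows "(\<Sum>q\<in>perms n. E_std n p q * (if q i = j then 1 else 0)) =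
    (real n - 1) / fact n * (real (\<Sum>q\<in>{q\<in>perms n. q i = j}. card {k\<in>{..<n}. q k = p k}) - fact (n - 1))"
proof -
  define T where "T = {q\<in>perms n. q i = j}"
  have "(\<Sum>q\<in>perms n. E_std n p q * (if q i = j then 1 else 0))
      = (\<Sum>q\<in>perms n. if q i = j then E_std n p q else 0)" by (rule sum.cong) auto
  also have "\<dots> = (\<Sum>q\<in>T. E_std n p q)"
    unfolding T_def using finite_perms[of n] by (simp add: sum.inter_filter)
  also have "\<dots> = (\<Sum>q\<in>T. (real n - 1) / fact n * (real (card {k\<in>{..<n}. q k = p k}) - 1))"
    unfolding E_std_def using chi_std_inv_compose[OF p] by (simp add: chi_std_def)
  also have "\<dots> = (real n - 1) / fact n * (\<Sum>q\<in>T. real (card {k\<in>{..<n}. q k = p k}) - 1)"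
    by (simp add: sum_distrib_left)
  also have "(\<Sum>q\<in>T. real (card {k\<in>{..<n}. q k = p k}) - 1)
      = real (\<Sum>q\<in>T. card {k\<in>{..<n}. q k = p k}) - real (card T)"
    by (simp add: sum_subtractf)
  finally show ?thesis using card_perms_value[OF i j] unfolding T_def by simp
qed

lemma sum_E_std_coset:
  assumes n: "2 \<le> n" and p: "p \<in> perms n" and i: "i < n" and j: "j < n"
  shows "(\<Sum>q\<in>perms n. E_std n p q * (if q i = j then 1 else 0)) = (if p i = j then 1 else 0) - 1 / real n"
proof -
  define N where "N = (\<Sum>q\<in>{q\<in>perms n. q i = j}. card {k\<in>{..<n}. q k = p k})"
  note sum = sum_E_std_indicator_coset[OF p i j, folded N_def]
  note N = sum_agreements_coset[OF n p i j, folded N_def]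
  define b c F :: real where "b = real n" and "c = real n - 1" and "F = fact (n - 2)"
  have nonzero: "b \<noteq> 0" "c \<noteq> 0" "F \<noteq> 0" unfolding b_def c_def F_def using n by auto
  have facts: "fact (n - 1) = c * F" "fact n = b * (c * F)"
    unfolding b_def c_def F_def
    using n fact_reduce[of "n - 1", where 'a = real] fact_reduce[of n, where 'a = real]
    by (simp_all add: numeral_2_eq_2 of_nat_diff)
  show ?thesis
  proof (cases "p i = j")
    case True
    then have "N = fact (n - 1) + (n - 1) * fact (n - 2)" using N by simp
    then have "real N = fact (n - 1) + real (n - 1) * fact (n - 2)"
      by (simp only: of_nat_add of_nat_mult of_nat_fact)
    then have "real N - fact (n - 1) = c * F" using n unfolding c_def F_def by (simp add: of_nat_diff)
    then have "(\<Sum>q\<in>perms n. E_std n p q * (if q i = j then 1 else 0)) = c / (b * (c * F)) * (c * F)"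
      using sum facts unfolding b_def c_def by simp
    also have "\<dots> = 1 - 1 / real n" using nonzero unfolding b_def c_def by (simp add: field_simps)
    finally show ?thesis using True by simp
  next
    case False
    then have "N = (n - 2) * fact (n - 2)" using N by simp
    then have "real N = real (n - 2) * fact (n - 2)"
      by (simp only: of_nat_mult of_nat_fact)
    then have "real N - fact (n - 1) = - F"
      using n facts(1) unfolding c_def F_def by (simp add: of_nat_diff algebra_simps)
    then have "(\<Sum>q\<in>perms n. E_std n p q * (if q i = j then 1 else 0)) = c / (b * (c * F)) * (- F)"
      using sum facts unfolding b_def c_def by simp
    also have "\<dots> = - 1 / real n" using nonzero unfolding b_def by (simp add: field_simps)
    finally show ?thesis using False by simp
  qed
qed

lemma coset_in_module_std:
  assumes "2 \<le> n" "i < n" "j < n"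
  shows "(\<lambda>p. (if p \<in> {q\<in>perms n. q i = j} then 1 else 0) - 1 / real n) \<in> module_std n"
  unfolding module_std_def using sum_E_std_coset[OF assms(1) _ assms(2,3)]
  by (intro CollectI exI[of _ "\<lambda>q. if q i = j then 1 else 0"]) simp

theorem lemma8:
  fixes n :: nat and S :: "(nat \<Rightarrow> nat) set"
  assumes "n > 6"
    and "perm_independent n S"
    and "card S = fact (n - 1)"
  shows "(\<lambda>p. (if p \<in> S then 1 else 0) - 1 / real n) \<in> module_std n"
proof -
  obtain i j where "i < n" "j < n" "S = {p\<in>perms n. p i = j}"
    using perm_independent_max_eq_coset[of n S] assms by auto
  then show ?thesis using coset_in_module_std[of n i j] assms(1) by simp
qed

end
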